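(* Let $s_t(\theta)$, $t\in[0,T]$, be trajectories smoothly parameterized by $\theta\in\Theta$ with $\frac{\partial s_t(\theta)}{\partial t}=f_t(s_t(\theta))$ for a smooth $f_t$, and with observation model $y_t=h(s_t(\theta),u_t)+W_t$, $W_t$ white noise with invertible covariance $R_t$. Set $F_t(s):=\partial f_t(s)/\partial s$, $G_t:=\partial s_t(\theta)/\partial\theta$ (assumed invertible), $H_t:=\partial h(s_t,u_t)/\partial s_t$. Let $\mathbf y$ be a smooth function, and consider the continuous-time online natural gradient for this model with observations $\mathbf y$, using at time $t$ the covariant derivative $D^t$ associated with the chart $\theta\mapsto s_t(\theta)$. Let $J_{t\downarrow t}:=(G_t(\theta_t)^{-1})^\top J_tG_t(\theta_t)^{-1}$ be the matrix of $J_t$ in chart $s_t$. Then $$\frac{d}{dt}J_{t\downarrow t}=-F_t^\top J_{t\downarrow t}-J_{t\downarrow t}F_t-\gamma_tJ_{t\downarrow t}+\gamma_tH_t^\top R_t^{-1}H_t,$$ $$\dot\theta_t=\eta_tG_t^{-1}J_{t\downarrow t}^{-1}H_t^\top R_t^{-1}\big(y_t-h(s_t(\theta_t),u_t)\big),$$ initialized with $J_{0\downarrow0}=(G_0^{-1})^\top J_0G_0^{-1}$, where $F_t,H_t$ are evaluated at $s_t(\theta_t)$ and $G_t$ at $\theta_t$. Moreover $$\frac{d}{dt}s_t(\theta_t)=f_t(s_t(\theta_t))+\eta_tJ_{t\downarrow t}^{-1}H_t^\top R_t^{-1}\big(y_t-h(s_t(\theta_t),u_t)\big).$$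
   Context: Continuous-time online natural gradient: given learning rates $\eta_t$, decay rates $\gamma_t$ and covariant derivatives, it is the solution $(\theta_t,J_t)$ ($J_t$ a positive definite $(0,2)$-tensor at $\theta_t$, written as a matrix in the chart $\theta$) of $\frac{DJ_t}{dt}=-\gamma_tJ_t+\gamma_tj_t(\theta_t)$, $\dot\theta_t=\eta_tJ_t^{-1}(\partial\ell_t(\mathbf y\mid\theta)/\partial\theta|_{\theta_t})^\top$, where, with $p(\mathbf y\mid\theta)$ the density of the model w.r.t. the Wiener measure (law of the centered white noise with covariance $R_t$), $J_{[0,T]}(\theta)=\mathbb E_{\mathbf y\sim p(\cdot\mid\theta)}[(\partial\ln p(\mathbf y\mid\theta)/\partial\theta)^{\otimes2}]$, $j_t=\frac{d}{dt}J_{[0,t]}$, and $\ell_t(\mathbf y\mid\theta)=\frac{d}{dt}\ln p(y_{[0,t]}\mid\theta)$. Covariant derivative associated with a chart $\Phi$: $\frac{DZ_t}{dt}=\mathbf T_{\theta_t}\Phi^{-1}(\frac{d}{dt}\mathbf T\Phi(Z_t))$, $\mathbf T\Phi$ denoting coordinate expression. Gradients are row vectors; $v^{\otimes2}=v^\top v$ for row vectors. *)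

theory Defs
  imports "HOL-Analysis.Analysis"
begin

fun hdiff_on :: "nat \<Rightarrow> 'a::real_normed_vector set \<Rightarrow> ('a \<Rightarrow> 'b::real_normed_vector) \<Rightarrow> bool" where
  "hdiff_on 0 S f = continuous_on S f"
| "hdiff_on (Suc k) S f =
     ((\<forall>x\<in>S. f differentiable (at x)) \<and>
      (\<forall>v. hdiff_on k S (\<lambda>x. frechet_derivative f (at x) v)))"

definition smooth_on :: "'a::real_normed_vector set \<Rightarrow> ('a \<Rightarrow> 'b::real_normed_vector) \<Rightarrow> bool" where
  "smooth_on S f \<longleftrightarrow> open S \<and> (\<forall>k. hdiff_on k S f)"

definition jacobian :: "(real^'n \<Rightarrow> real^'m) \<Rightarrow> real^'n \<Rightarrow> real^'n^'m" where
  "jacobian g x = matrix (frechet_derivative g (at x))"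

definition grad :: "(real^'n \<Rightarrow> real) \<Rightarrow> real^'n \<Rightarrow> real^'n" where
  "grad g x = (\<chi> i. frechet_derivative g (at x) (axis i 1))"

definition pos_def :: "real^'n^'n \<Rightarrow> bool" where
  "pos_def A \<longleftrightarrow> transpose A = A \<and> (\<forall>x. x \<noteq> 0 \<longrightarrow> x \<bullet> (A *v x) > 0)"

definition pos_semidef :: "real^'n^'n \<Rightarrow> bool" where
  "pos_semidef A \<longleftrightarrow> transpose A = A \<and> (\<forall>x. x \<bullet> (A *v x) \<ge> 0)"

text \<open>Coordinate expression in the chart Phi (Jacobian A at the base point) of the
 (0,2)-tensor written as the matrix M in the chart theta, and its inverse.\<close>
definition tensor_coord :: "real^'n^'n \<Rightarrow> real^'n^'n \<Rightarrow> real^'n^'n" where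
  "tensor_coord A M = transpose (matrix_inv A) ** M ** matrix_inv A"

definition tensor_uncoord :: "real^'n^'n \<Rightarrow> real^'n^'n \<Rightarrow> real^'n^'n" where
  "tensor_uncoord A M = transpose A ** M ** A"

text \<open>has_cov_deriv Phi th Z D t S: along the curve th, the tensor field Z
 has covariant derivative D at time t (relative to S), for the covariant
 derivative associated with the (fixed) chart Phi:
 D = T Phi^{-1} (d/dtau T Phi (Z_tau)) at tau = t.\<close>
definition has_cov_deriv ::
  "(real^'n \<Rightarrow> real^'n) \<Rightarrow> (real \<Rightarrow> real^'n) \<Rightarrow> (real \<Rightarrow> real^'n^'n) \<Rightarrow> real^'n^'n
     \<Rightarrow> real \<Rightarrow> real set \<Rightarrow> bool" where
  "has_cov_deriv Phi th Z D t S \<longleftrightarrow>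
     (\<exists>M. ((\<lambda>\<tau>. tensor_coord (jacobian Phi (th \<tau>)) (Z \<tau>)) has_vector_derivative M) (at t within S)
          \<and> D = tensor_uncoord (jacobian Phi (th t)) M)"

text \<open>ell t theta : instantaneous log-likelihood rate, j t theta : Fisher information rate,
 chart t : chart used for the covariant derivative at time t.\<close>
definition ong_solution ::
  "real \<Rightarrow> (real^'n) set \<Rightarrow> (real \<Rightarrow> real) \<Rightarrow> (real \<Rightarrow> real)
     \<Rightarrow> (real \<Rightarrow> real^'n \<Rightarrow> real) \<Rightarrow> (real \<Rightarrow> real^'n \<Rightarrow> real^'n^'n)
     \<Rightarrow> (real \<Rightarrow> real^'n \<Rightarrow> real^'n)
     \<Rightarrow> (real \<Rightarrow> real^'n) \<Rightarrow> (real \<Rightarrow> real^'n^'n) \<Rightarrow> bool" where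
  "ong_solution T Theta eta gamma ell j chart th J \<longleftrightarrow>
     (\<forall>t\<in>{0..T}.
        th t \<in> Theta \<and> pos_def (J t) \<and>
        has_cov_deriv (chart t) th J (- (gamma t *\<^sub>R J t) + gamma t *\<^sub>R j t (th t)) t {0..T} \<and>
        (th has_vector_derivative (eta t *\<^sub>R (matrix_inv (J t) *v grad (ell t) (th t)))) (at t within {0..T}))"

text \<open>Log-likelihood rate d/dt ln p(y_[0,t] | theta) for white-noise observations with
 smooth observed signal y (Girsanov density w.r.t. the Wiener measure of covariance R):
 ln p = int h^T R^-1 dy - 1/2 int h^T R^-1 h dt.\<close>
definition obs_loglik_rate ::
  "(real \<Rightarrow> real^'n \<Rightarrow> real^'n) \<Rightarrow> (real^'n \<Rightarrow> 'u \<Rightarrow> real^'m) \<Rightarrow> (real \<Rightarrow> 'u)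
     \<Rightarrow> (real \<Rightarrow> real^'m^'m) \<Rightarrow> (real \<Rightarrow> real^'m) \<Rightarrow> real \<Rightarrow> real^'n \<Rightarrow> real" where
  "obs_loglik_rate s h u R y t th =
     h (s t th) (u t) \<bullet> (matrix_inv (R t) *v y t)
     - (1/2) * (h (s t th) (u t) \<bullet> (matrix_inv (R t) *v h (s t th) (u t)))"

text \<open>Fisher information rate j_t = d/dt J_[0,t] for this model:
 (dh/dtheta)^T R^-1 (dh/dtheta).\<close>
definition obs_fisher_rate ::
  "(real \<Rightarrow> real^'n \<Rightarrow> real^'n) \<Rightarrow> (real^'n \<Rightarrow> 'u \<Rightarrow> real^'m) \<Rightarrow> (real \<Rightarrow> 'u)
     \<Rightarrow> (real \<Rightarrow> real^'m^'m) \<Rightarrow> real \<Rightarrow> real^'n \<Rightarrow> real^'n^'n" where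
  "obs_fisher_rate s h u R t th =
     (let Dh = jacobian (\<lambda>x. h (s t x) (u t)) th in transpose Dh ** matrix_inv (R t) ** Dh)"

end

(*
  The covariant derivative prescribed at time t is the ordinary derivative of
  the coordinate expression in the chart s_t frozen at time t; passing to the moving chart s_tau
  adds -F^T J_{t|t} - J_{t|t} F, because the Jacobians of the two charts along theta_tau differ
  in derivative by d/dt G = F G.  This variational equation follows from ds/dt = f(s) by the
  symmetry of second derivatives.  In the state chart the Fisher rate becomes H^T R^-1 H and the
  score of the Gaussian likelihood is G^T H^T R^-1 (y - h), which gives the parameter velocity;
  the chain rule for s_t(theta_t) then gives the state velocity.
*)
theory Submission
  imports Defs
begin

section \<open>Symmetry of second derivatives\<close>

definition second_derivative ::
  "('a::real_normed_vector \<Rightarrow> 'b::real_normed_vector) \<Rightarrow> 'a \<Rightarrow> 'a \<Rightarrow> 'a \<Rightarrow> 'b" where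
  "second_derivative g z v w = frechet_derivative (\<lambda>z. frechet_derivative g (at z) v) (at z) w"

lemma has_real_derivative_along_line:
  fixes g :: "'a::real_normed_vector \<Rightarrow> real"
  assumes "(g has_derivative g') (at (c + a *\<^sub>R w))"
  shows "((\<lambda>\<alpha>. g (c + \<alpha> *\<^sub>R w)) has_real_derivative g' w) (at a)"
proof -
  have "((\<lambda>\<alpha>. c + \<alpha> *\<^sub>R w) has_vector_derivative w) (at a)"
    by (auto intro!: derivative_eq_intros)
  from vector_derivative_diff_chain_within[OF this has_derivative_at_withinI[OF assms]]
  show ?thesis by (simp add: o_def has_real_derivative_iff_has_vector_derivative)
qed

lemma norm_scaleR_add_le:
  fixes v w :: "'a::real_normed_vector"
  assumes "0 \<le> \<alpha>" "\<alpha> \<le> a" "0 \<le> \<beta>" "\<beta> \<le> a"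
  shows "norm (\<alpha> *\<^sub>R w + \<beta> *\<^sub>R v) \<le> a * (norm v + norm w)"
proof -
  have "norm (\<alpha> *\<^sub>R w + \<beta> *\<^sub>R v) \<le> \<alpha> * norm w + \<beta> * norm v"
    using norm_triangle_ineq[of "\<alpha> *\<^sub>R w" "\<beta> *\<^sub>R v"] assms by simp
  also have "\<dots> \<le> a * norm w + a * norm v"
    using assms by (intro add_mono mult_right_mono) auto
  finally show ?thesis by (simp add: algebra_simps)
qed

lemma second_difference_mean_value:
  fixes g :: "'a::real_normed_vector \<Rightarrow> real"
  assumes U: "ball z r \<subseteq> U"
    and dg: "\<And>y. y \<in> U \<Longrightarrow> (g has_derivative g' y) (at y)"
    and dw: "\<And>y. y \<in> U \<Longrightarrow> ((\<lambda>y. g' y w) has_derivative B y) (at y)"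
    and a: "0 < a" "a * (norm v + norm w) < r"
  obtains p where "dist z p \<le> a * (norm v + norm w)"
    "g (z + a *\<^sub>R v + a *\<^sub>R w) - g (z + a *\<^sub>R v) - g (z + a *\<^sub>R w) + g z = a * a * B p v"
proof -
  have inU: "z + \<alpha> *\<^sub>R w + \<beta> *\<^sub>R v \<in> U" if "0 \<le> \<alpha>" "\<alpha> \<le> a" "0 \<le> \<beta>" "\<beta> \<le> a" for \<alpha> \<beta>
  proof -
    have "dist z (z + \<alpha> *\<^sub>R w + \<beta> *\<^sub>R v) = norm (\<alpha> *\<^sub>R w + \<beta> *\<^sub>R v)"
      by (simp add: dist_norm algebra_simps norm_minus_commute)
    also have "\<dots> < r" using norm_scaleR_add_le[OF that, of w v] a by simp
    finally show ?thesis using U by auto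
  qed
  define \<psi> where "\<psi> \<alpha> = g ((z + a *\<^sub>R v) + \<alpha> *\<^sub>R w) - g (z + \<alpha> *\<^sub>R w)" for \<alpha>
  obtain \<xi> where \<xi>: "0 < \<xi>" "\<xi> < a"
    and \<psi>_diff: "\<psi> a - \<psi> 0 = (a - 0) * (g' ((z + a *\<^sub>R v) + \<xi> *\<^sub>R w) w - g' (z + \<xi> *\<^sub>R w) w)"
  proof (atomize_elim, unfold \<psi>_def, rule MVT2[OF a(1)])
    fix \<alpha> assume "0 \<le> \<alpha>" "\<alpha> \<le> a"
    then have "(z + a *\<^sub>R v) + \<alpha> *\<^sub>R w \<in> U" "z + \<alpha> *\<^sub>R w \<in> U"
      using inU[of \<alpha> a] inU[of \<alpha> 0] a by (simp_all add: algebra_simps)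
    then show "((\<lambda>\<alpha>. g ((z + a *\<^sub>R v) + \<alpha> *\<^sub>R w) - g (z + \<alpha> *\<^sub>R w)) has_real_derivative
        g' ((z + a *\<^sub>R v) + \<alpha> *\<^sub>R w) w - g' (z + \<alpha> *\<^sub>R w) w) (at \<alpha>)"
      by (intro DERIV_diff has_real_derivative_along_line dg)
  qed
  obtain \<eta> where \<eta>: "0 < \<eta>" "\<eta> < a"
    and g'_diff: "g' ((z + \<xi> *\<^sub>R w) + a *\<^sub>R v) w - g' ((z + \<xi> *\<^sub>R w) + 0 *\<^sub>R v) w
       = (a - 0) * B ((z + \<xi> *\<^sub>R w) + \<eta> *\<^sub>R v) v"
  proof (atomize_elim, rule MVT2[OF a(1)])
    fix \<beta> assume "0 \<le> \<beta>" "\<beta> \<le> a"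
    then have "(z + \<xi> *\<^sub>R w) + \<beta> *\<^sub>R v \<in> U" using inU[of \<xi> \<beta>] \<xi> by simp
    then show "((\<lambda>\<beta>. g' ((z + \<xi> *\<^sub>R w) + \<beta> *\<^sub>R v) w) has_real_derivative
        B ((z + \<xi> *\<^sub>R w) + \<beta> *\<^sub>R v) v) (at \<beta>)"
      by (intro has_real_derivative_along_line dw)
  qed
  show thesis
  proof
    show "dist z (z + \<xi> *\<^sub>R w + \<eta> *\<^sub>R v) \<le> a * (norm v + norm w)"
      using norm_scaleR_add_le[of \<xi> a \<eta> w v] \<xi> \<eta> by (simp add: dist_norm algebra_simps norm_minus_commute)
    have "z + a *\<^sub>R v + \<xi> *\<^sub>R w = z + \<xi> *\<^sub>R w + a *\<^sub>R v" by (simp add: algebra_simps)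
    then have "\<psi> a - \<psi> 0 = a * a * B (z + \<xi> *\<^sub>R w + \<eta> *\<^sub>R v) v"
      using \<psi>_diff g'_diff by (simp only: diff_zero scaleR_zero_left add_0_right mult.assoc)
    then show "g (z + a *\<^sub>R v + a *\<^sub>R w) - g (z + a *\<^sub>R v) - g (z + a *\<^sub>R w) + g z
        = a * a * B (z + \<xi> *\<^sub>R w + \<eta> *\<^sub>R v) v"
      by (simp add: \<psi>_def algebra_simps)
  qed
qed

text \<open>Both second differences along \<open>v\<close> and \<open>w\<close> equal \<open>a\<^sup>2\<close> times a mixed derivative
  at points that tend to \<open>z\<close> with \<open>a\<close>.\<close>
lemma mixed_derivatives_eq:
  fixes g :: "'a::real_normed_vector \<Rightarrow> real"
  assumes U: "open U" "z \<in> U"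
    and dg: "\<And>y. y \<in> U \<Longrightarrow> (g has_derivative g' y) (at y)"
    and dv: "\<And>y. y \<in> U \<Longrightarrow> ((\<lambda>y. g' y v) has_derivative A y) (at y)"
    and dw: "\<And>y. y \<in> U \<Longrightarrow> ((\<lambda>y. g' y w) has_derivative B y) (at y)"
    and cA: "continuous_on U (\<lambda>y. A y w)" and cB: "continuous_on U (\<lambda>y. B y v)"
  shows "A z w = B z v"
proof (rule ccontr)
  assume "A z w \<noteq> B z v"
  define d where "d = \<bar>A z w - B z v\<bar> / 2"
  have "d > 0" using \<open>A z w \<noteq> B z v\<close> by (simp add: d_def)
  obtain r where r: "r > 0" "ball z r \<subseteq> U" using U open_contains_ball by blast
  obtain d1 where d1: "d1 > 0" "\<And>y. y \<in> U \<Longrightarrow> dist y z < d1 \<Longrightarrow> dist (A y w) (A z w) < d"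
    using cA U \<open>d > 0\<close> unfolding continuous_on_iff by metis
  obtain d2 where d2: "d2 > 0" "\<And>y. y \<in> U \<Longrightarrow> dist y z < d2 \<Longrightarrow> dist (B y v) (B z v) < d"
    using cB U \<open>d > 0\<close> unfolding continuous_on_iff by metis
  define m where "m = min r (min d1 d2)"
  define c where "c = norm v + norm w + 1"
  define a where "a = m / (2 * c)"
  have "m > 0" using r d1 d2 by (simp add: m_def)
  have "c > 0" unfolding c_def by (intro add_nonneg_pos add_nonneg_nonneg norm_ge_zero) simp
  then have "a > 0" using \<open>m > 0\<close> by (simp add: a_def)
  have am: "a * (norm v + norm w) < m"
  proof -
    have "a * (norm v + norm w) \<le> a * c" using \<open>a > 0\<close> by (simp add: c_def)
    also have "\<dots> = m / 2" using \<open>c > 0\<close> by (simp add: a_def)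
    finally show ?thesis using \<open>m > 0\<close> by simp
  qed
  obtain p where p: "dist z p \<le> a * (norm v + norm w)"
    and ep: "g (z + a *\<^sub>R v + a *\<^sub>R w) - g (z + a *\<^sub>R v) - g (z + a *\<^sub>R w) + g z = a * a * B p v"
    using second_difference_mean_value[OF r(2) dg dw \<open>a > 0\<close>] am by (auto simp: m_def)
  obtain q where q: "dist z q \<le> a * (norm w + norm v)"
    and eq: "g (z + a *\<^sub>R w + a *\<^sub>R v) - g (z + a *\<^sub>R w) - g (z + a *\<^sub>R v) + g z = a * a * A q w"
    using second_difference_mean_value[OF r(2) dg dv \<open>a > 0\<close>, of w] am by (auto simp: m_def add.commute)
  have "B p v = A q w" using ep eq \<open>a > 0\<close> by (simp add: algebra_simps)
  moreover have "p \<in> U" "dist p z < d2" using p am r by (auto simp: m_def dist_commute)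
  moreover have "q \<in> U" "dist q z < d1" using q am r by (auto simp: m_def dist_commute add.commute)
  ultimately have "\<bar>A z w - B z v\<bar> < d + d"
    using d1(2)[of q] d2(2)[of p] by (simp add: dist_real_def)
  then show False by (simp add: d_def)
qed

lemma smooth_on_open: "smooth_on U g \<Longrightarrow> open U"
  by (simp add: smooth_on_def)

lemma smooth_on_continuous_on: "smooth_on U g \<Longrightarrow> continuous_on U g"
  by (metis hdiff_on.simps(1) smooth_on_def)

lemma smooth_on_differentiable: "smooth_on U g \<Longrightarrow> x \<in> U \<Longrightarrow> g differentiable (at x)"
  by (metis hdiff_on.simps(2) smooth_on_def)

lemma smooth_on_has_derivative:
  "smooth_on U g \<Longrightarrow> x \<in> U \<Longrightarrow> (g has_derivative frechet_derivative g (at x)) (at x)"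
  using smooth_on_differentiable frechet_derivative_works by blast

lemma smooth_on_frechet_derivative:
  "smooth_on U g \<Longrightarrow> smooth_on U (\<lambda>x. frechet_derivative g (at x) v)"
  by (metis hdiff_on.simps(2) smooth_on_def)

lemma smooth_on_has_second_derivative:
  "smooth_on U g \<Longrightarrow> x \<in> U \<Longrightarrow>
    ((\<lambda>x. frechet_derivative g (at x) v) has_derivative second_derivative g x v) (at x)"
  unfolding second_derivative_def
  by (intro smooth_on_has_derivative smooth_on_frechet_derivative) auto

lemma smooth_on_second_derivative_symmetric:
  fixes g :: "'a::real_normed_vector \<Rightarrow> 'b::real_inner"
  assumes g: "smooth_on U g" and "z \<in> U"
  shows "second_derivative g z v w = second_derivative g z w v"
proof -
  note inner_e = bounded_linear.has_derivative[OF bounded_linear_inner_left]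
  have "second_derivative g z v w \<bullet> e = second_derivative g z w v \<bullet> e" for e
  proof (rule mixed_derivatives_eq[OF smooth_on_open[OF g] \<open>z \<in> U\<close>])
    fix y assume "y \<in> U"
    show "((\<lambda>y. g y \<bullet> e) has_derivative (\<lambda>h. frechet_derivative g (at y) h \<bullet> e)) (at y)"
      by (rule inner_e[OF smooth_on_has_derivative[OF g \<open>y \<in> U\<close>]])
    show "((\<lambda>y. frechet_derivative g (at y) v \<bullet> e) has_derivative
        (\<lambda>h. second_derivative g y v h \<bullet> e)) (at y)"
      "((\<lambda>y. frechet_derivative g (at y) w \<bullet> e) has_derivative
        (\<lambda>h. second_derivative g y w h \<bullet> e)) (at y)"
      by (rule inner_e[OF smooth_on_has_second_derivative[OF g \<open>y \<in> U\<close>]])+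
  next
    have "continuous_on U (\<lambda>y. second_derivative g y u u' \<bullet> e)" for u u'
      unfolding second_derivative_def
      by (intro continuous_on_inner continuous_on_const smooth_on_continuous_on
          smooth_on_frechet_derivative g)
    then show "continuous_on U (\<lambda>y. second_derivative g y v w \<bullet> e)"
      "continuous_on U (\<lambda>y. second_derivative g y w v \<bullet> e)" by this+
  qed
  from this[of "second_derivative g z v w - second_derivative g z w v"]
  have "(second_derivative g z v w - second_derivative g z w v) \<bullet>
      (second_derivative g z v w - second_derivative g z w v) = 0"
    by (simp only: inner_diff_left diff_self)
  then show ?thesis by simp
qed

section \<open>Matrix calculus\<close>

lemma bounded_bilinear_matrix_mult:
  "bounded_bilinear ((**) :: real^'n^'m \<Rightarrow> real^'p^'n \<Rightarrow> real^'p^'m)"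
proof -
  have "bilinear ((**) :: real^'n^'m \<Rightarrow> real^'p^'n \<Rightarrow> real^'p^'m)"
    unfolding bilinear_def
    by (auto intro!: linearI simp: matrix_matrix_mult_def vec_eq_iff sum.distrib
        distrib_left distrib_right sum_distrib_left mult_ac)
  then show ?thesis using bilinear_conv_bounded_bilinear by blast
qed

lemma bounded_linear_transpose: "bounded_linear (transpose :: real^'n^'m \<Rightarrow> real^'m^'n)"
proof -
  have "linear (transpose :: real^'n^'m \<Rightarrow> real^'m^'n)"
    by (rule linearI) (auto simp: transpose_def vec_eq_iff)
  then show ?thesis using linear_conv_bounded_linear by blast
qed

lemmas matrix_mult_linear_simps =
  bounded_bilinear.add_left[OF bounded_bilinear_matrix_mult]
  bounded_bilinear.add_right[OF bounded_bilinear_matrix_mult]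
  bounded_bilinear.diff_left[OF bounded_bilinear_matrix_mult]
  bounded_bilinear.diff_right[OF bounded_bilinear_matrix_mult]
  bounded_bilinear.minus_left[OF bounded_bilinear_matrix_mult]
  bounded_bilinear.minus_right[OF bounded_bilinear_matrix_mult]
  bounded_bilinear.scaleR_left[OF bounded_bilinear_matrix_mult]
  bounded_bilinear.scaleR_right[OF bounded_bilinear_matrix_mult]
  linear_add[OF bounded_linear.linear[OF bounded_linear_transpose]]
  linear_diff[OF bounded_linear.linear[OF bounded_linear_transpose]]
  linear_neg[OF bounded_linear.linear[OF bounded_linear_transpose]]
  transpose_scalar

lemma matrix_inv_right: "invertible (A::'a::field^'n^'n) \<Longrightarrow> A ** matrix_inv A = mat 1"
  and matrix_inv_left: "invertible (A::'a::field^'n^'n) \<Longrightarrow> matrix_inv A ** A = mat 1"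
  unfolding invertible_def matrix_inv_def by (auto intro: someI2_ex)

lemma matrix_inv_unique:
  fixes A B :: "'a::field^'n^'n"
  assumes "A ** B = mat 1"
  shows "matrix_inv A = B"
proof -
  have "invertible A" using assms invertible_right_inverse by blast
  then have "matrix_inv A = matrix_inv A ** (A ** B)" by (simp add: assms)
  also have "\<dots> = B" by (simp add: matrix_mul_assoc matrix_inv_left[OF \<open>invertible A\<close>])
  finally show ?thesis .
qed

lemma matrix_inv_transpose:
  fixes A :: "real^'n^'n"
  assumes "invertible A"
  shows "matrix_inv (transpose A) = transpose (matrix_inv A)"
  by (rule matrix_inv_unique)
    (simp flip: matrix_transpose_mul add: matrix_inv_left[OF assms])

lemma pos_def_invertible:
  fixes A :: "real^'n^'n"
  assumes "pos_def A"
  shows "invertible A"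
proof -
  have "x = 0" if "A *v x = 0" for x
    using assms that unfolding pos_def_def by force
  then show ?thesis using matrix_left_invertible_ker invertible_left_inverse by blast
qed

lemma matrix_inv_entry:
  fixes A :: "real^'n^'n"
  assumes "invertible A"
  shows "matrix_inv A $ i $ j = det (\<chi> a b. if b = i then axis j 1 $ a else A $ a $ b) / det A"
proof -
  have "A *v (matrix_inv A *v axis j 1) = axis j 1"
    by (simp add: matrix_vector_mul_assoc matrix_inv_right[OF assms])
  with cramer[OF invertible_det_nz[THEN iffD1, OF assms]]
  have "(matrix_inv A *v axis j 1) $ i = det (\<chi> a b. if b = i then axis j 1 $ a else A $ a $ b) / det A"
    by simp
  then show ?thesis by (simp add: matrix_vector_mult_basis column_def)
qed

lemma tendsto_det:
  fixes M :: "'a \<Rightarrow> real^'n^'n"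
  assumes "(M \<longlongrightarrow> A) F"
  shows "((\<lambda>x. det (M x)) \<longlongrightarrow> det A) F"
  unfolding det_def by (intro tendsto_intros assms)

lemma continuous_matrix_inv:
  fixes P :: "real \<Rightarrow> real^'n^'n"
  assumes "continuous (at t within S) P" "\<forall>\<tau>\<in>S. invertible (P \<tau>)" "t \<in> S"
  shows "continuous (at t within S) (\<lambda>\<tau>. matrix_inv (P \<tau>))"
  unfolding continuous_within
proof (intro vec_tendstoI)
  fix i j
  have "(P \<longlongrightarrow> P t) (at t within S)" using assms(1) continuous_within by blast
  then have P: "((\<lambda>\<tau>. P \<tau> $ a $ b) \<longlongrightarrow> P t $ a $ b) (at t within S)" for a b
    by (intro tendsto_vec_nth)
  define cramer where
    "cramer \<tau> = det (\<chi> a b. if b = j then axis i 1 $ a else P \<tau> $ a $ b) / det (P \<tau>)" for \<tau>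
  have lim: "(cramer \<longlongrightarrow> cramer t) (at t within S)"
    unfolding cramer_def using assms(2,3) invertible_det_nz
    by (intro tendsto_intros tendsto_det) (auto intro: P simp: continuous_within[symmetric] assms(1))
  have eq: "matrix_inv (P \<tau>) $ j $ i = cramer \<tau>" if "\<tau> \<in> S" for \<tau>
    using assms(2) that by (simp add: cramer_def matrix_inv_entry)
  have "((\<lambda>\<tau>. matrix_inv (P \<tau>) $ j $ i) \<longlongrightarrow> cramer t) (at t within S)
      \<longleftrightarrow> (cramer \<longlongrightarrow> cramer t) (at t within S)"
    by (rule Lim_cong_within) (auto simp: eq)
  then show "((\<lambda>\<tau>. matrix_inv (P \<tau>) $ j $ i) \<longlongrightarrow> matrix_inv (P t) $ j $ i) (at t within S)"
    using lim eq[OF assms(3)] by simp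
qed

lemma has_vector_derivative_iff_difference_quotient:
  fixes f :: "real \<Rightarrow> 'a::real_normed_vector"
  shows "(f has_vector_derivative D) (at x within S) \<longleftrightarrow>
    ((\<lambda>y. (f y - f x) /\<^sub>R (y - x)) \<longlongrightarrow> D) (at x within S)"
proof -
  have eq: "norm ((1 / norm (y - x)) *\<^sub>R (f y - (f x + (y - x) *\<^sub>R D)))
      = norm ((f y - f x) /\<^sub>R (y - x) - D)" if "y \<noteq> x" for y
  proof -
    have "(1 / (y - x)) *\<^sub>R (f y - (f x + (y - x) *\<^sub>R D))
        = (1 / (y - x)) *\<^sub>R (f y - f x) - (1 / (y - x)) *\<^sub>R ((y - x) *\<^sub>R D)"
      by (simp only: diff_diff_add[symmetric] scaleR_diff_right)
    then have "(f y - f x) /\<^sub>R (y - x) - D = (1 / (y - x)) *\<^sub>R (f y - (f x + (y - x) *\<^sub>R D))"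
      using that by (simp add: divide_inverse)
    then show ?thesis by simp
  qed
  have "(f has_vector_derivative D) (at x within S) \<longleftrightarrow>
      ((\<lambda>y. norm ((1 / norm (y - x)) *\<^sub>R (f y - (f x + (y - x) *\<^sub>R D)))) \<longlongrightarrow> 0) (at x within S)"
    unfolding has_vector_derivative_def has_derivative_within tendsto_norm_zero_iff
    by (simp add: bounded_linear_scaleR_left)
  also have "\<dots> \<longleftrightarrow> ((\<lambda>y. norm ((f y - f x) /\<^sub>R (y - x) - D)) \<longlongrightarrow> 0) (at x within S)"
    by (rule Lim_cong_within) (use eq in auto)
  also have "\<dots> \<longleftrightarrow> ((\<lambda>y. (f y - f x) /\<^sub>R (y - x)) \<longlongrightarrow> D) (at x within S)"
    unfolding tendsto_norm_zero_iff LIM_zero_iff ..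
  finally show ?thesis .
qed

text \<open>The difference quotient of the inverse is
  \<open>P\<^sup>-\<^sup>1(y) (P(t) - P(y)) P\<^sup>-\<^sup>1(t) / (y - t)\<close>, and \<open>P\<^sup>-\<^sup>1\<close> is continuous.\<close>
lemma has_vector_derivative_matrix_inv:
  fixes P :: "real \<Rightarrow> real^'n^'n"
  assumes P: "(P has_vector_derivative P') (at t within S)"
    and inv: "\<forall>\<tau>\<in>S. invertible (P \<tau>)" and "t \<in> S"
  shows "((\<lambda>\<tau>. matrix_inv (P \<tau>)) has_vector_derivative
      - (matrix_inv (P t) ** P' ** matrix_inv (P t))) (at t within S)"
proof -
  let ?Pi = "\<lambda>\<tau>. matrix_inv (P \<tau>)"
  note mult = bounded_bilinear_matrix_mult
  have "(?Pi \<longlongrightarrow> ?Pi t) (at t within S)"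
    using continuous_matrix_inv[OF has_vector_derivative_continuous[OF P] inv \<open>t \<in> S\<close>]
    by (simp add: continuous_within)
  moreover have "((\<lambda>y. (P y - P t) /\<^sub>R (y - t)) \<longlongrightarrow> P') (at t within S)"
    using P has_vector_derivative_iff_difference_quotient by blast
  ultimately have lim: "((\<lambda>y. - (?Pi y ** ((P y - P t) /\<^sub>R (y - t)) ** ?Pi t))
      \<longlongrightarrow> - (?Pi t ** P' ** ?Pi t)) (at t within S)"
    by (intro tendsto_minus bounded_bilinear.tendsto[OF mult] tendsto_const)
  have "(?Pi y - ?Pi t) /\<^sub>R (y - t) = - (?Pi y ** ((P y - P t) /\<^sub>R (y - t)) ** ?Pi t)"
    if "y \<in> S" for y
  proof -
    have "P y ** ?Pi y = mat 1" "?Pi y ** P y = mat 1" "P t ** ?Pi t = mat 1"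
      using inv that \<open>t \<in> S\<close> by (simp_all add: matrix_inv_left matrix_inv_right)
    then have inv_diff: "?Pi y ** (P y - P t) ** ?Pi t = ?Pi t - ?Pi y"
      by (simp add: bounded_bilinear.diff_left[OF mult] bounded_bilinear.diff_right[OF mult]
          flip: matrix_mul_assoc)
    have "- (?Pi y ** ((P y - P t) /\<^sub>R (y - t)) ** ?Pi t)
        = - ((?Pi y ** (P y - P t) ** ?Pi t) /\<^sub>R (y - t))"
      by (simp only: bounded_bilinear.scaleR_left[OF mult] bounded_bilinear.scaleR_right[OF mult])
    also have "\<dots> = (?Pi y - ?Pi t) /\<^sub>R (y - t)"
      by (simp only: inv_diff scaleR_minus_right[symmetric] minus_diff_eq)
    finally show ?thesis by (rule sym)
  qed
  then have "((\<lambda>y. (?Pi y - ?Pi t) /\<^sub>R (y - t)) \<longlongrightarrow> - (?Pi t ** P' ** ?Pi t)) (at t within S)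
      \<longleftrightarrow> ((\<lambda>y. - (?Pi y ** ((P y - P t) /\<^sub>R (y - t)) ** ?Pi t))
        \<longlongrightarrow> - (?Pi t ** P' ** ?Pi t)) (at t within S)"
    by (intro Lim_cong_within) auto
  with lim show ?thesis
    unfolding has_vector_derivative_iff_difference_quotient by blast
qed

lemma has_derivative_vec_lambda:
  fixes f :: "'a::real_normed_vector \<Rightarrow> 'i::finite \<Rightarrow> 'b::real_normed_vector"
  assumes "\<And>i. ((\<lambda>x. f x i) has_derivative f' i) F"
  shows "((\<lambda>x. \<chi> i. f x i) has_derivative (\<lambda>h. \<chi> i. f' i h)) F"
proof -
  have vec: "(\<chi> i. a i) = (\<Sum>i\<in>UNIV. axis i (a i))" for a :: "'i \<Rightarrow> 'b"
    by (simp add: vec_eq_iff axis_def if_distrib cong: if_cong)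
  have axis: "bounded_linear (axis i :: 'b \<Rightarrow> 'b^'i)" for i
  proof (rule bounded_linear_intro[where K=1])
    fix x :: 'b
    have "norm (axis i x) \<le> (\<Sum>j\<in>UNIV. norm (axis i x $ j))"
      unfolding norm_vec_def by (rule L2_set_le_sum) simp
    also have "\<dots> = norm x" by (simp add: axis_def if_distrib cong: if_cong)
    finally show "norm (axis i x) \<le> norm x * 1" by simp
  qed (auto simp: vec_eq_iff axis_def)
  show ?thesis unfolding vec
    by (intro has_derivative_sum) (rule bounded_linear.has_derivative[OF axis assms])
qed

lemma jacobian_apply: "(g has_derivative g') (at x) \<Longrightarrow> jacobian g x *v v = g' v"
  unfolding jacobian_def by (simp add: frechet_derivative_at[symmetric] has_derivative_linear)

lemma jacobian_eqI: "(g has_derivative (\<lambda>v. A *v v)) (at x) \<Longrightarrow> jacobian g x = A"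
  by (simp add: matrix_eq jacobian_apply)

lemma has_derivative_jacobian:
  "g differentiable (at x) \<Longrightarrow> (g has_derivative (\<lambda>v. jacobian g x *v v)) (at x)"
  using frechet_derivative_works jacobian_apply by fastforce

lemma jacobian_compose:
  assumes "f differentiable (at x)" "g differentiable (at (f x))"
  shows "jacobian (\<lambda>x. g (f x)) x = jacobian g (f x) ** jacobian f x"
  using has_derivative_compose[OF has_derivative_jacobian has_derivative_jacobian, OF assms]
  by (intro jacobian_eqI) (simp add: matrix_vector_mul_assoc)

section \<open>Coordinate expressions of (0,2)-tensors\<close>

lemma transpose_matrix_inv_right:
  "invertible (A::real^'n^'n) \<Longrightarrow> transpose (matrix_inv A) ** transpose A = mat 1"
  using matrix_transpose_mul[of A "matrix_inv A"] by (simp add: matrix_inv_right)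

lemma transpose_matrix_inv_left:
  "invertible (A::real^'n^'n) \<Longrightarrow> transpose A ** transpose (matrix_inv A) = mat 1"
  using matrix_transpose_mul[of "matrix_inv A" A] by (simp add: matrix_inv_left)

lemma tensor_coord_uncoord:
  assumes "invertible A"
  shows "tensor_coord A (tensor_uncoord A M) = M"
proof -
  have "tensor_coord A (tensor_uncoord A M)
      = (transpose (matrix_inv A) ** transpose A) ** M ** (A ** matrix_inv A)"
    unfolding tensor_coord_def tensor_uncoord_def by (simp only: matrix_mul_assoc)
  also have "\<dots> = M"
    by (simp only: matrix_inv_right[OF assms] transpose_matrix_inv_right[OF assms]
        matrix_mul_lid matrix_mul_rid)
  finally show ?thesis .
qed

lemma tensor_coord_change_chart:
  assumes "invertible A" "invertible B"
  shows "tensor_coord A Z = tensor_uncoord (B ** matrix_inv A) (tensor_coord B Z)"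
proof -
  have "tensor_uncoord (B ** matrix_inv A) (tensor_coord B Z)
      = transpose (matrix_inv A) ** (transpose B ** transpose (matrix_inv B)) ** Z
        ** (matrix_inv B ** B) ** matrix_inv A"
    unfolding tensor_coord_def tensor_uncoord_def
    by (simp only: matrix_transpose_mul matrix_mul_assoc)
  also have "\<dots> = tensor_coord A Z"
    unfolding tensor_coord_def
    by (simp only: matrix_inv_left[OF assms(2)] transpose_matrix_inv_left[OF assms(2)]
        matrix_mul_lid matrix_mul_rid)
  finally show ?thesis ..
qed

lemma matrix_inv_tensor_coord:
  assumes "invertible A" "invertible Z"
  shows "matrix_inv (tensor_coord A Z) = A ** matrix_inv Z ** transpose A"
proof (rule matrix_inv_unique)
  have "tensor_coord A Z ** (A ** matrix_inv Z ** transpose A)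
      = transpose (matrix_inv A) ** (Z ** ((matrix_inv A ** A) ** matrix_inv Z)) ** transpose A"
    unfolding tensor_coord_def by (simp only: matrix_mul_assoc)
  also have "\<dots> = mat 1"
    by (simp only: matrix_inv_left[OF assms(1)] matrix_inv_right[OF assms(2)]
        transpose_matrix_inv_right[OF assms(1)] matrix_mul_lid matrix_mul_rid)
  finally show "tensor_coord A Z ** (A ** matrix_inv Z ** transpose A) = mat 1" .
qed

lemma has_cov_deriv_coord:
  assumes "has_cov_deriv Phi th Z D t S" "invertible (jacobian Phi (th t))"
  shows "((\<lambda>\<tau>. tensor_coord (jacobian Phi (th \<tau>)) (Z \<tau>)) has_vector_derivative
      tensor_coord (jacobian Phi (th t)) D) (at t within S)"
  using assms unfolding has_cov_deriv_def by (auto simp: tensor_coord_uncoord)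

lemma has_vector_derivative_tensor_uncoord:
  assumes "(A has_vector_derivative A') (at t within S)" "(M has_vector_derivative M') (at t within S)"
  shows "((\<lambda>\<tau>. tensor_uncoord (A \<tau>) (M \<tau>)) has_vector_derivative
      transpose A' ** M t ** A t + transpose (A t) ** M' ** A t + transpose (A t) ** M t ** A')
      (at t within S)"
proof -
  note mult = bounded_bilinear.has_vector_derivative[OF bounded_bilinear_matrix_mult]
  from mult[OF mult[OF bounded_linear.has_vector_derivative[OF bounded_linear_transpose assms(1)]
        assms(2)] assms(1)]
  show ?thesis
    unfolding tensor_uncoord_def
    by (simp add: bounded_bilinear.add_left[OF bounded_bilinear_matrix_mult] add_ac)
qed

text \<open>With \<open>N = B A\<^sup>-\<^sup>1\<close> we have \<open>tensor_coord A Z = tensor_uncoord N (tensor_coord B Z)\<close>,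
  \<open>N(t) = 1\<close> and \<open>N'(t) = - C\<close>.\<close>
lemma has_vector_derivative_tensor_coord_change_chart:
  fixes A B :: "real \<Rightarrow> real^'n^'n"
  assumes A: "(A has_vector_derivative A') (at t within S)"
    and B: "(B has_vector_derivative B') (at t within S)"
    and inv: "\<And>\<tau>. \<tau> \<in> S \<Longrightarrow> invertible (A \<tau>) \<and> invertible (B \<tau>)"
    and "t \<in> S" "A t = B t"
    and K: "((\<lambda>\<tau>. tensor_coord (B \<tau>) (Z \<tau>)) has_vector_derivative M) (at t within S)"
  defines "C \<equiv> (A' - B') ** matrix_inv (A t)" and "K0 \<equiv> tensor_coord (A t) (Z t)"
  shows "((\<lambda>\<tau>. tensor_coord (A \<tau>) (Z \<tau>)) has_vector_derivative
      M - transpose C ** K0 - K0 ** C) (at t within S)"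
proof -
  define N where "N \<tau> = B \<tau> ** matrix_inv (A \<tau>)" for \<tau>
  have inv_t: "invertible (A t)" using inv \<open>t \<in> S\<close> by blast
  have "((\<lambda>\<tau>. matrix_inv (A \<tau>)) has_vector_derivative
      - (matrix_inv (A t) ** A' ** matrix_inv (A t))) (at t within S)"
    using has_vector_derivative_matrix_inv[OF A _ \<open>t \<in> S\<close>] inv by blast
  from bounded_bilinear.has_vector_derivative[OF bounded_bilinear_matrix_mult B this]
  have "(N has_vector_derivative - C) (at t within S)"
    unfolding N_def C_def \<open>A t = B t\<close>[symmetric]
    by (simp add: matrix_mult_linear_simps matrix_inv_right[OF inv_t] matrix_mul_assoc)
  from has_vector_derivative_tensor_uncoord[OF this K]
  have uncoord: "((\<lambda>\<tau>. tensor_uncoord (N \<tau>) (tensor_coord (B \<tau>) (Z \<tau>))) has_vector_derivative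
      M - transpose C ** K0 - K0 ** C) (at t within S)"
    by (simp add: N_def K0_def \<open>A t = B t\<close>[symmetric] matrix_inv_right[OF inv_t]
        matrix_mult_linear_simps)
  have "tensor_coord (A \<tau>) (Z \<tau>) = tensor_uncoord (N \<tau>) (tensor_coord (B \<tau>) (Z \<tau>))"
    if "\<tau> \<in> S" for \<tau>
    using inv[OF that] by (simp add: N_def tensor_coord_change_chart)
  from has_vector_derivative_transform[OF \<open>t \<in> S\<close> this uncoord] show ?thesis .
qed

section \<open>Jacobians of a flow\<close>

lemma has_derivative_partial_right:
  assumes "((\<lambda>(\<tau>, x). s \<tau> x) has_derivative D) (at (t, x))"
  shows "(s t has_derivative (\<lambda>v. D (0, v))) (at x)"
proof -
  have "((\<lambda>x. (t, x)) has_derivative (\<lambda>v. (0, v))) (at x)"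
    by (auto intro!: derivative_eq_intros)
  from has_derivative_compose[OF this assms] show ?thesis by simp
qed

lemma has_vector_derivative_partial_left:
  assumes "((\<lambda>(\<tau>, x). s \<tau> x) has_derivative D) (at (t, x))"
  shows "((\<lambda>\<tau>. s \<tau> x) has_vector_derivative D (1, 0)) (at t)"
proof -
  have "((\<lambda>\<tau>. (\<tau>, x)) has_vector_derivative (1, 0)) (at t)"
    by (auto intro!: derivative_eq_intros)
  from vector_derivative_diff_chain_within[OF this has_derivative_at_withinI[OF assms]]
  show ?thesis by (simp add: o_def)
qed

lemma smooth_on_jacobian_partial:
  assumes "smooth_on U (\<lambda>(\<tau>, x). s \<tau> x)" "(t, x) \<in> U"
  shows "jacobian (s t) x *v v = frechet_derivative (\<lambda>(\<tau>, x). s \<tau> x) (at (t, x)) (0, v)"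
  using jacobian_apply[OF has_derivative_partial_right[OF smooth_on_has_derivative[OF assms]]] .

lemma frechet_derivative_flow_time:
  assumes "smooth_on U (\<lambda>(\<tau>, x). s \<tau> x)" "(t, x) \<in> U" "a < b" "t \<in> {a..b}"
    and "((\<lambda>\<tau>. s \<tau> x) has_vector_derivative f t (s t x)) (at t within {a..b})"
  shows "frechet_derivative (\<lambda>(\<tau>, x). s \<tau> x) (at (t, x)) (1, 0) = f t (s t x)"
  using vector_derivative_unique_within_closed_interval[unfolded cbox_interval, OF \<open>a < b\<close> \<open>t \<in> {a..b}\<close>
      has_vector_derivative_at_within[OF has_vector_derivative_partial_left
        [OF smooth_on_has_derivative[OF assms(1,2)]]] assms(5)] .

lemma matrix_vector_mult_axis_nth: "((A::real^'n^'m) *v axis j 1) $ i = A $ i $ j"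
  by (simp add: matrix_vector_mult_basis column_def)

lemma has_derivative_partial_jacobian:
  assumes g: "smooth_on U (\<lambda>(\<tau>, x). s \<tau> x)" and "z \<in> U"
  shows "((\<lambda>(\<tau>, x). jacobian (s \<tau>) x) has_derivative
      (\<lambda>w. \<chi> i j. second_derivative (\<lambda>(\<tau>, x). s \<tau> x) z (0, axis j 1) w $ i)) (at z)"
proof -
  let ?Dg = "\<lambda>z. frechet_derivative (\<lambda>(\<tau>, x). s \<tau> x) (at z)"
  have "((\<lambda>z. \<chi> i j. ?Dg z (0, axis j 1) $ i) has_derivative
      (\<lambda>w. \<chi> i j. second_derivative (\<lambda>(\<tau>, x). s \<tau> x) z (0, axis j 1) w $ i)) (at z)"
    by (intro has_derivative_vec_lambda bounded_linear.has_derivative[OF bounded_linear_vec_nth]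
        smooth_on_has_second_derivative[OF g \<open>z \<in> U\<close>])
  moreover have "(\<chi> i j. ?Dg z' (0, axis j 1) $ i) = (case z' of (\<tau>, x) \<Rightarrow> jacobian (s \<tau>) x)"
    if "z' \<in> U" for z'
  proof (cases z')
    case (Pair \<tau> x)
    show ?thesis
      using smooth_on_jacobian_partial[OF g that[unfolded Pair]]
      by (simp add: Pair vec_eq_iff flip: matrix_vector_mult_axis_nth)
  qed
  ultimately show ?thesis
    using has_derivative_transform_within_open[OF _ smooth_on_open[OF g] \<open>z \<in> U\<close>] by blast
qed

lemma smooth_on_differentiable_partial:
  "smooth_on U (\<lambda>(\<tau>, x). s \<tau> x) \<Longrightarrow> (t, x) \<in> U \<Longrightarrow> s t differentiable (at x)"
  using has_derivative_partial_right[OF smooth_on_has_derivative] by (blast intro: differentiableI)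

lemma second_derivative_flow:
  assumes g: "smooth_on U (\<lambda>(\<tau>, x). s \<tau> x)" and "open \<Theta>" "x \<in> \<Theta>" and U: "{t} \<times> \<Theta> \<subseteq> U"
    and "a < b" "t \<in> {a..b}"
    and ode: "\<And>x. x \<in> \<Theta> \<Longrightarrow> ((\<lambda>\<tau>. s \<tau> x) has_vector_derivative f t (s t x)) (at t within {a..b})"
    and f: "f t differentiable (at (s t x))"
  shows "second_derivative (\<lambda>(\<tau>, x). s \<tau> x) (t, x) (1, 0) (0, v)
    = jacobian (f t) (s t x) *v (jacobian (s t) x *v v)"
proof -
  let ?g = "\<lambda>(\<tau>, x). s \<tau> x"
  have "(t, x) \<in> U" using assms by blast
  have "((\<lambda>(\<tau>, y). frechet_derivative ?g (at (\<tau>, y)) (1, 0)) has_derivative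
      second_derivative ?g (t, x) (1, 0)) (at (t, x))"
    using smooth_on_has_second_derivative[OF g \<open>(t, x) \<in> U\<close>] by (simp add: case_prod_beta')
  from has_derivative_partial_right[OF this]
  have time_deriv: "((\<lambda>y. frechet_derivative ?g (at (t, y)) (1, 0)) has_derivative
      (\<lambda>v. second_derivative ?g (t, x) (1, 0) (0, v))) (at x)" .
  have chain: "((\<lambda>y. f t (s t y)) has_derivative
      (\<lambda>v. jacobian (f t) (s t x) *v (jacobian (s t) x *v v))) (at x)"
    using has_derivative_compose[OF has_derivative_jacobian has_derivative_jacobian,
        OF smooth_on_differentiable_partial[OF g \<open>(t, x) \<in> U\<close>] f] .
  have ode_eq: "f t (s t y) = frechet_derivative ?g (at (t, y)) (1, 0)" if "y \<in> \<Theta>" for y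
  proof -
    have "(t, y) \<in> U" using that U by blast
    from frechet_derivative_flow_time[where s = s and f = f, OF g this \<open>a < b\<close> \<open>t \<in> {a..b}\<close> ode[OF that]]
    show ?thesis by (rule sym)
  qed
  have "((\<lambda>y. frechet_derivative ?g (at (t, y)) (1, 0)) has_derivative
      (\<lambda>v. jacobian (f t) (s t x) *v (jacobian (s t) x *v v))) (at x)"
    by (rule has_derivative_transform_within_open[OF chain \<open>open \<Theta>\<close> \<open>x \<in> \<Theta>\<close> ode_eq])
  from has_derivative_unique[OF time_deriv this] show ?thesis by meson
qed

text \<open>Exchanging the order of differentiation turns the variational equation into the
  time derivative \<open>F G\<close> of the Jacobian.\<close>
lemma has_vector_derivative_jacobian_flow:
  assumes g: "smooth_on U (\<lambda>(\<tau>, x). s \<tau> x)" and "open \<Theta>" and U: "{t} \<times> \<Theta> \<subseteq> U"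
    and "a < b" "t \<in> {a..b}"
    and ode: "\<And>x. x \<in> \<Theta> \<Longrightarrow> ((\<lambda>\<tau>. s \<tau> x) has_vector_derivative f t (s t x)) (at t within {a..b})"
    and "th t \<in> \<Theta>" and f_diff: "f t differentiable (at (s t (th t)))"
    and th: "(th has_vector_derivative th') (at t within S)"
  obtains A' B' where
    "((\<lambda>\<tau>. jacobian (s \<tau>) (th \<tau>)) has_vector_derivative A') (at t within S)"
    "((\<lambda>\<tau>. jacobian (s t) (th \<tau>)) has_vector_derivative B') (at t within S)"
    "A' - B' = jacobian (f t) (s t (th t)) ** jacobian (s t) (th t)"
proof -
  let ?g = "\<lambda>(\<tau>, x). s \<tau> x"
  define z where "z = (t, th t)"
  have "z \<in> U" using assms by (auto simp: z_def)
  define L where "L w = (\<chi> i j. second_derivative ?g z (0, axis j 1) w $ i)" for w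
  have L: "((\<lambda>(\<tau>, x). jacobian (s \<tau>) x) has_derivative L) (at z)"
    unfolding L_def by (rule has_derivative_partial_jacobian[OF g \<open>z \<in> U\<close>])
  have along: "((\<lambda>\<tau>. jacobian (s (c \<tau>)) (th \<tau>)) has_vector_derivative L (c', th')) (at t within S)"
    if "(c has_vector_derivative c') (at t within S)" "c t = t" for c c'
  proof -
    have "((\<lambda>\<tau>. (c \<tau>, th \<tau>)) has_vector_derivative (c', th')) (at t within S)"
      using that(1) th by (rule has_vector_derivative_Pair)
    moreover have "((\<lambda>(\<tau>, x). jacobian (s \<tau>) x) has_derivative L) (at (c t, th t))"
      using L that(2) by (simp add: z_def)
    ultimately show ?thesis
      by (auto dest: vector_derivative_diff_chain_within[OF _ has_derivative_at_withinI]
          simp: o_def)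
  qed
  have "L (1, th') - L (0, th') = L (1, 0)"
    using linear_diff[OF has_derivative_linear[OF L], of "(1, th')" "(0, th')"] by simp
  also have "\<dots> = jacobian (f t) (s t (th t)) ** jacobian (s t) (th t)"
  proof -
    have "L (1, 0) $ i $ j = second_derivative ?g z (1, 0) (0, axis j 1) $ i" for i j
      using smooth_on_second_derivative_symmetric[OF g \<open>z \<in> U\<close>] by (simp add: L_def)
    also have "\<dots> i j = (jacobian (f t) (s t (th t)) ** jacobian (s t) (th t)) $ i $ j" for i j
      using second_derivative_flow[where f = f, OF g \<open>open \<Theta>\<close> \<open>th t \<in> \<Theta>\<close> U \<open>a < b\<close>
          \<open>t \<in> {a..b}\<close> ode f_diff]
      by (simp add: z_def matrix_vector_mul_assoc flip: matrix_vector_mult_axis_nth)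
    finally show ?thesis by (simp add: vec_eq_iff)
  qed
  finally show thesis
    using that along[of "\<lambda>\<tau>. \<tau>" 1] along[of "\<lambda>_. t" 0]
    by (auto intro: derivative_eq_intros)
qed

lemma has_vector_derivative_flow_along_curve:
  assumes g: "smooth_on U (\<lambda>(\<tau>, x). s \<tau> x)" and "(t, th t) \<in> U" "a < b" "t \<in> {a..b}"
    and ode: "((\<lambda>\<tau>. s \<tau> (th t)) has_vector_derivative f t (s t (th t))) (at t within {a..b})"
    and th: "(th has_vector_derivative th') (at t within S)"
  shows "((\<lambda>\<tau>. s \<tau> (th \<tau>)) has_vector_derivative
      f t (s t (th t)) + jacobian (s t) (th t) *v th') (at t within S)"
proof -
  let ?Dg = "frechet_derivative (\<lambda>(\<tau>, x). s \<tau> x) (at (t, th t))"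
  have "((\<lambda>\<tau>. (\<tau>, th \<tau>)) has_vector_derivative (1, th')) (at t within S)"
    using th by (auto intro: derivative_eq_intros)
  from vector_derivative_diff_chain_within[OF this
      has_derivative_at_withinI[OF smooth_on_has_derivative[OF g \<open>(t, th t) \<in> U\<close>]]]
  have "((\<lambda>\<tau>. s \<tau> (th \<tau>)) has_vector_derivative ?Dg (1, th')) (at t within S)"
    by (simp add: o_def)
  moreover have "?Dg (1, th') = ?Dg (1, 0) + ?Dg (0, th')"
    using linear_add[OF has_derivative_linear[OF smooth_on_has_derivative[OF g \<open>(t, th t) \<in> U\<close>]],
        of "(1, 0)" "(0, th')"] by simp
  ultimately show ?thesis
    using frechet_derivative_flow_time[where f = f,
        OF g \<open>(t, th t) \<in> U\<close> \<open>a < b\<close> \<open>t \<in> {a..b}\<close> ode]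
      smooth_on_jacobian_partial[OF g \<open>(t, th t) \<in> U\<close>] by simp
qed

section \<open>The observation model\<close>

lemma inner_matrix_vector_mult: "((A::real^'n^'m) *v x) \<bullet> y = x \<bullet> (transpose A *v y)"
  using dot_lmul_matrix[of y A x] by (simp add: inner_commute)

lemma grad_eq_transpose_jacobian:
  "(g has_derivative (\<lambda>v. (A *v v) \<bullet> w)) (at x) \<Longrightarrow> grad g x = transpose A *v w"
  by (simp add: grad_def vec_eq_iff frechet_derivative_at[symmetric] inner_matrix_vector_mult
      inner_axis' del: transpose_matrix_vector)

lemma grad_gaussian_loglik:
  fixes k :: "real^'n \<Rightarrow> real^'m"
  assumes "k differentiable (at x)" "transpose Q = Q"
  shows "grad (\<lambda>x. k x \<bullet> (Q *v c) - 1/2 * (k x \<bullet> (Q *v k x))) x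
    = transpose (jacobian k x) *v (Q *v (c - k x))"
proof (rule grad_eq_transpose_jacobian)
  let ?L = "jacobian k x"
  have sym: "k x \<bullet> (Q *v u) = u \<bullet> (Q *v k x)" for u
    using inner_matrix_vector_mult[of Q u "k x"] \<open>transpose Q = Q\<close> by (simp add: inner_commute)
  have k: "(k has_derivative (\<lambda>v. ?L *v v)) (at x)"
    by (rule has_derivative_jacobian[OF assms(1)])
  have "((\<lambda>x. k x \<bullet> (Q *v c) - 1/2 * (k x \<bullet> (Q *v k x))) has_derivative
      (\<lambda>v. (k x \<bullet> 0 + (?L *v v) \<bullet> (Q *v c))
        - 1/2 * (k x \<bullet> (Q *v (?L *v v)) + (?L *v v) \<bullet> (Q *v k x)))) (at x)"
    by (intro has_derivative_diff has_derivative_mult_right has_derivative_inner k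
        has_derivative_const bounded_linear.has_derivative[OF matrix_vector_mul_bounded_linear])
  then show "((\<lambda>x. k x \<bullet> (Q *v c) - 1/2 * (k x \<bullet> (Q *v k x))) has_derivative
      (\<lambda>v. (?L *v v) \<bullet> (Q *v (c - k x)))) (at x)"
    by (rule has_derivative_eq_rhs)
      (simp add: fun_eq_iff sym matrix_vector_mult_diff_distrib inner_diff_right)
qed

lemma tensor_coord_add: "tensor_coord A (X + Y) = tensor_coord A X + tensor_coord A Y"
  and tensor_coord_diff: "tensor_coord A (X - Y) = tensor_coord A X - tensor_coord A Y"
  and tensor_coord_minus: "tensor_coord A (- X) = - tensor_coord A X"
  and tensor_coord_scaleR: "tensor_coord A (c *\<^sub>R X) = c *\<^sub>R tensor_coord A X"
  by (simp_all add: tensor_coord_def matrix_mult_linear_simps)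

lemma obs_fisher_rate_eq:
  assumes "s t differentiable (at x)" "(\<lambda>z. h z (u t)) differentiable (at (s t x))"
  shows "obs_fisher_rate s h u R t x = tensor_uncoord (jacobian (s t) x)
    (transpose (jacobian (\<lambda>z. h z (u t)) (s t x)) ** matrix_inv (R t) ** jacobian (\<lambda>z. h z (u t)) (s t x))"
  unfolding obs_fisher_rate_def tensor_uncoord_def Let_def
    jacobian_compose[where g = "\<lambda>z. h z (u t)", OF assms]
  by (simp add: matrix_transpose_mul matrix_mul_assoc)

section \<open>The online natural gradient in the state chart\<close>

lemma has_vector_derivative_information_state_chart:
  fixes s f :: "real \<Rightarrow> real^'n \<Rightarrow> real^'n" and h :: "real^'n \<Rightarrow> 'u \<Rightarrow> real^'m"
    and J :: "real \<Rightarrow> real^'n^'n"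
  assumes g: "smooth_on U (\<lambda>(\<tau>, x). s \<tau> x)" and "open \<Theta>" and U: "{0..T} \<times> \<Theta> \<subseteq> U"
    and "0 < T" "t \<in> {0..T}"
    and ode: "\<And>x. x \<in> \<Theta> \<Longrightarrow> ((\<lambda>\<tau>. s \<tau> x) has_vector_derivative f t (s t x)) (at t within {0..T})"
    and f_diff: "f t differentiable (at (s t (th t)))"
    and h_diff: "(\<lambda>x. h x (u t)) differentiable (at (s t (th t)))"
    and th_in: "\<And>\<tau>. \<tau> \<in> {0..T} \<Longrightarrow> th \<tau> \<in> \<Theta>"
    and G_inv: "\<And>\<tau> x. \<tau> \<in> {0..T} \<Longrightarrow> x \<in> \<Theta> \<Longrightarrow> invertible (jacobian (s \<tau>) x)"
    and th: "(th has_vector_derivative th') (at t within {0..T})"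
    and cov: "has_cov_deriv (s t) th J
      (- (gamma t *\<^sub>R J t) + gamma t *\<^sub>R obs_fisher_rate s h u R t (th t)) t {0..T}"
  defines "G \<equiv> jacobian (s t) (th t)" and "F \<equiv> jacobian (f t) (s t (th t))"
    and "H \<equiv> jacobian (\<lambda>x. h x (u t)) (s t (th t))"
    and "Jd \<equiv> \<lambda>\<tau>. transpose (matrix_inv (jacobian (s \<tau>) (th \<tau>))) ** J \<tau> ** matrix_inv (jacobian (s \<tau>) (th \<tau>))"
  shows "(Jd has_vector_derivative
      - (transpose F ** Jd t) - Jd t ** F - gamma t *\<^sub>R Jd t
      + gamma t *\<^sub>R (transpose H ** matrix_inv (R t) ** H)) (at t within {0..T})"
proof -
  have "th t \<in> \<Theta>" "(t, th t) \<in> U" "invertible G" using assms by (auto simp: G_def)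
  obtain A' B' where
    A: "((\<lambda>\<tau>. jacobian (s \<tau>) (th \<tau>)) has_vector_derivative A') (at t within {0..T})" and
    B: "((\<lambda>\<tau>. jacobian (s t) (th \<tau>)) has_vector_derivative B') (at t within {0..T})" and
    "A' - B' = F ** G"
    using has_vector_derivative_jacobian_flow[where f = f, OF g \<open>open \<Theta>\<close> _ \<open>0 < T\<close> \<open>t \<in> {0..T}\<close>
        ode \<open>th t \<in> \<Theta>\<close> f_diff th] U \<open>t \<in> {0..T}\<close> unfolding F_def G_def by blast
  then have C: "(A' - B') ** matrix_inv G = F"
    by (simp add: matrix_mul_assoc[symmetric] matrix_inv_right[OF \<open>invertible G\<close>])
  have "obs_fisher_rate s h u R t (th t) = tensor_uncoord G (transpose H ** matrix_inv (R t) ** H)"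
    unfolding G_def H_def
    by (rule obs_fisher_rate_eq[where s = s and h = h and u = u,
          OF smooth_on_differentiable_partial[OF g \<open>(t, th t) \<in> U\<close>] h_diff])
  then have "tensor_coord G (- (gamma t *\<^sub>R J t) + gamma t *\<^sub>R obs_fisher_rate s h u R t (th t))
      = - (gamma t *\<^sub>R Jd t) + gamma t *\<^sub>R (transpose H ** matrix_inv (R t) ** H)"
    by (simp add: tensor_coord_add tensor_coord_diff tensor_coord_minus tensor_coord_scaleR
        tensor_coord_uncoord[OF \<open>invertible G\<close>]) (simp add: Jd_def G_def tensor_coord_def)
  moreover have "((\<lambda>\<tau>. tensor_coord (jacobian (s t) (th \<tau>)) (J \<tau>)) has_vector_derivative
      tensor_coord G (- (gamma t *\<^sub>R J t) + gamma t *\<^sub>R obs_fisher_rate s h u R t (th t)))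
      (at t within {0..T})"
    using has_cov_deriv_coord[OF cov] \<open>invertible G\<close> by (simp add: G_def)
  moreover have "invertible (jacobian (s \<tau>) (th \<tau>)) \<and> invertible (jacobian (s t) (th \<tau>))"
    if "\<tau> \<in> {0..T}" for \<tau>
    using G_inv th_in that \<open>t \<in> {0..T}\<close> by blast
  ultimately have "((\<lambda>\<tau>. tensor_coord (jacobian (s \<tau>) (th \<tau>)) (J \<tau>)) has_vector_derivative
      - (gamma t *\<^sub>R Jd t) + gamma t *\<^sub>R (transpose H ** matrix_inv (R t) ** H)
      - transpose F ** Jd t - Jd t ** F) (at t within {0..T})"
    using has_vector_derivative_tensor_coord_change_chart[OF A B _ \<open>t \<in> {0..T}\<close> refl] C
    by (simp add: G_def Jd_def tensor_coord_def)
  then show ?thesis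
    by (simp add: Jd_def tensor_coord_def algebra_simps)
qed

lemma natural_gradient_obs_loglik_rate:
  assumes s: "s t differentiable (at x)" and h: "(\<lambda>z. h z (u t)) differentiable (at (s t x))"
    and R: "transpose (R t) = R t" "invertible (R t)"
    and "invertible J0" "invertible (jacobian (s t) x)"
  defines "G \<equiv> jacobian (s t) x" and "H \<equiv> jacobian (\<lambda>z. h z (u t)) (s t x)"
  shows "matrix_inv J0 *v grad (obs_loglik_rate s h u R y t) x
    = matrix_inv G *v (matrix_inv (tensor_coord G J0) *v
        (transpose H *v (matrix_inv (R t) *v (y t - h (s t x) (u t)))))"
proof -
  let ?k = "\<lambda>z. h (s t z) (u t)" and ?w = "matrix_inv (R t) *v (y t - h (s t x) (u t))"
  have "obs_loglik_rate s h u R y t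
      = (\<lambda>z. ?k z \<bullet> (matrix_inv (R t) *v y t) - 1/2 * (?k z \<bullet> (matrix_inv (R t) *v ?k z)))"
    by (simp add: fun_eq_iff obs_loglik_rate_def)
  moreover have "transpose (matrix_inv (R t)) = matrix_inv (R t)"
    using R by (metis matrix_inv_transpose)
  ultimately have "grad (obs_loglik_rate s h u R y t) x = transpose (H ** G) *v ?w"
    using grad_gaussian_loglik[OF differentiable_chain_at[OF s h, unfolded o_def]]
      jacobian_compose[where g = "\<lambda>z. h z (u t)", OF s h]
    by (simp add: G_def H_def)
  then have "matrix_inv J0 *v grad (obs_loglik_rate s h u R y t) x
      = matrix_inv J0 *v (transpose G *v (transpose H *v ?w))"
    by (simp only: matrix_transpose_mul flip: matrix_vector_mul_assoc)
  also have "\<dots> = (matrix_inv J0 ** transpose G) *v (transpose H *v ?w)"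
    by (rule matrix_vector_mul_assoc)
  also have "matrix_inv J0 ** transpose G = matrix_inv G ** matrix_inv (tensor_coord G J0)"
    using \<open>invertible J0\<close> \<open>invertible (jacobian (s t) x)\<close>
    by (simp add: matrix_inv_tensor_coord G_def matrix_inv_left matrix_mul_assoc)
  finally show ?thesis by (simp only: matrix_vector_mul_assoc matrix_mul_assoc)
qed

lemma online_natural_gradient_state_chart_at:
  fixes s f :: "real \<Rightarrow> real^'n \<Rightarrow> real^'n" and h :: "real^'n \<Rightarrow> 'u \<Rightarrow> real^'m"
    and J :: "real \<Rightarrow> real^'n^'n"
  assumes g: "smooth_on U (\<lambda>(\<tau>, x). s \<tau> x)" and "open \<Theta>" and U: "{0..T} \<times> \<Theta> \<subseteq> U"
    and "0 < T" "t \<in> {0..T}"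
    and ode: "\<forall>x\<in>\<Theta>. ((\<lambda>\<tau>. s \<tau> x) has_vector_derivative f t (s t x)) (at t within {0..T})"
    and f_diff: "\<And>x. f t differentiable (at x)"
    and h_diff: "\<And>x. (\<lambda>x. h x (u t)) differentiable (at x)"
    and R: "transpose (R t) = R t" "invertible (R t)"
    and G_inv: "\<forall>\<tau>\<in>{0..T}. \<forall>x\<in>\<Theta>. invertible (jacobian (s \<tau>) x)"
    and ong: "ong_solution T \<Theta> eta gamma (obs_loglik_rate s h u R y) (obs_fisher_rate s h u R) s th J"
  defines "G \<equiv> jacobian (s t) (th t)" and "F \<equiv> jacobian (f t) (s t (th t))"
    and "H \<equiv> jacobian (\<lambda>x. h x (u t)) (s t (th t))"
    and "Jd \<equiv> \<lambda>\<tau>. transpose (matrix_inv (jacobian (s \<tau>) (th \<tau>))) ** J \<tau> ** matrix_inv (jacobian (s \<tau>) (th \<tau>))"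
    and "innov \<equiv> matrix_inv (transpose (matrix_inv (jacobian (s t) (th t))) ** J t
      ** matrix_inv (jacobian (s t) (th t))) *v (transpose (jacobian (\<lambda>x. h x (u t)) (s t (th t)))
      *v (matrix_inv (R t) *v (y t - h (s t (th t)) (u t))))"
  shows "(Jd has_vector_derivative
        - (transpose F ** Jd t) - Jd t ** F - gamma t *\<^sub>R Jd t
        + gamma t *\<^sub>R (transpose H ** matrix_inv (R t) ** H)) (at t within {0..T})
    \<and> (th has_vector_derivative eta t *\<^sub>R (matrix_inv G *v innov)) (at t within {0..T})
    \<and> ((\<lambda>\<tau>. s \<tau> (th \<tau>)) has_vector_derivative f t (s t (th t)) + eta t *\<^sub>R innov)
        (at t within {0..T})"
proof -
  have th_in: "th \<tau> \<in> \<Theta>" if "\<tau> \<in> {0..T}" for \<tau>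
    using ong that unfolding ong_solution_def by blast
  have "pos_def (J t)" and cov: "has_cov_deriv (s t) th J
      (- (gamma t *\<^sub>R J t) + gamma t *\<^sub>R obs_fisher_rate s h u R t (th t)) t {0..T}"
    and th: "(th has_vector_derivative eta t *\<^sub>R
      (matrix_inv (J t) *v grad (obs_loglik_rate s h u R y t) (th t))) (at t within {0..T})"
    using ong \<open>t \<in> {0..T}\<close> unfolding ong_solution_def by blast+
  have "(t, th t) \<in> U" "invertible G" using assms th_in[OF \<open>t \<in> {0..T}\<close>] by (auto simp: G_def)
  have velocity:
    "matrix_inv (J t) *v grad (obs_loglik_rate s h u R y t) (th t) = matrix_inv G *v innov"
    using natural_gradient_obs_loglik_rate[where s = s and h = h and u = u and R = R and t = t,
        OF smooth_on_differentiable_partial[OF g \<open>(t, th t) \<in> U\<close>] h_diff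
        R pos_def_invertible[OF \<open>pos_def (J t)\<close>] \<open>invertible G\<close>[unfolded G_def]]
    by (simp add: innov_def G_def H_def tensor_coord_def)
  show ?thesis
  proof (intro conjI)
    show "(Jd has_vector_derivative
        - (transpose F ** Jd t) - Jd t ** F - gamma t *\<^sub>R Jd t
        + gamma t *\<^sub>R (transpose H ** matrix_inv (R t) ** H)) (at t within {0..T})"
      unfolding Jd_def F_def H_def
      using has_vector_derivative_information_state_chart[where s = s and f = f and h = h
          and u = u and th = th and J = J and R = R and gamma = gamma and t = t,
          OF g \<open>open \<Theta>\<close> U \<open>0 < T\<close> \<open>t \<in> {0..T}\<close> _ f_diff h_diff th_in _ th cov]
        ode G_inv by blast
    show th': "(th has_vector_derivative eta t *\<^sub>R (matrix_inv G *v innov)) (at t within {0..T})"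
      using th velocity by simp
    have "G *v (eta t *\<^sub>R (matrix_inv G *v innov)) = eta t *\<^sub>R innov"
      by (simp add: matrix_vector_mult_scaleR matrix_vector_mul_assoc
          matrix_inv_right[OF \<open>invertible G\<close>])
    then show "((\<lambda>\<tau>. s \<tau> (th \<tau>)) has_vector_derivative f t (s t (th t)) + eta t *\<^sub>R innov)
        (at t within {0..T})"
      using has_vector_derivative_flow_along_curve[where s = s and f = f and th = th,
          OF g \<open>(t, th t) \<in> U\<close> \<open>0 < T\<close> \<open>t \<in> {0..T}\<close> _ th']
        ode th_in[OF \<open>t \<in> {0..T}\<close>]
      by (simp add: G_def)
  qed
qed

lemma has_vector_derivative_at_within_singleton: "(f has_vector_derivative D) (at t within {t})"
  by (simp add: has_vector_derivative_def at_within_def bounded_linear_scaleR_left has_derivative_bot)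

theorem corollary25:
  fixes T :: real
    and Theta :: "(real^'n) set"
    and s :: "real \<Rightarrow> real^'n \<Rightarrow> real^'n"
    and f :: "real \<Rightarrow> real^'n \<Rightarrow> real^'n"
    and h :: "real^'n \<Rightarrow> 'u \<Rightarrow> real^'m"
    and u :: "real \<Rightarrow> 'u"
    and R :: "real \<Rightarrow> real^'m^'m"
    and y :: "real \<Rightarrow> real^'m"
    and eta gamma :: "real \<Rightarrow> real"
    and th :: "real \<Rightarrow> real^'n"
    and J :: "real \<Rightarrow> real^'n^'n"
  assumes "open Theta"
    and s_smooth: "\<exists>U. {0..T} \<times> Theta \<subseteq> U \<and> smooth_on U (\<lambda>(t, x). s t x)"
    and s_ode: "\<forall>t\<in>{0..T}. \<forall>x\<in>Theta.
                  ((\<lambda>\<tau>. s \<tau> x) has_vector_derivative f t (s t x)) (at t within {0..T})"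
    and f_smooth: "\<forall>t. smooth_on UNIV (f t)"
    and h_smooth: "\<forall>v. smooth_on UNIV (\<lambda>x. h x v)"
    and R_cov: "\<forall>t\<in>{0..T}. pos_semidef (R t) \<and> invertible (R t)"
    and G_inv: "\<forall>t\<in>{0..T}. \<forall>x\<in>Theta. invertible (jacobian (s t) x)"
    and y_smooth: "\<exists>V. {0..T} \<subseteq> V \<and> smooth_on V y"
    and ong: "ong_solution T Theta eta gamma (obs_loglik_rate s h u R y)
                (obs_fisher_rate s h u R) s th J"
  shows "let G = (\<lambda>t. jacobian (s t) (th t));
             F = (\<lambda>t. jacobian (f t) (s t (th t)));
             H = (\<lambda>t. jacobian (\<lambda>x. h x (u t)) (s t (th t)));
             Jd = (\<lambda>t. transpose (matrix_inv (G t)) ** J t ** matrix_inv (G t));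
             innov = (\<lambda>t. matrix_inv (Jd t) *v (transpose (H t) *v
                            (matrix_inv (R t) *v (y t - h (s t (th t)) (u t)))))
         in (\<forall>t\<in>{0..T}.
               (Jd has_vector_derivative
                  (- (transpose (F t) ** Jd t) - Jd t ** F t - gamma t *\<^sub>R Jd t
                   + gamma t *\<^sub>R (transpose (H t) ** matrix_inv (R t) ** H t)))
                 (at t within {0..T})
             \<and> (th has_vector_derivative (eta t *\<^sub>R (matrix_inv (G t) *v innov t)))
                 (at t within {0..T})
             \<and> ((\<lambda>t. s t (th t)) has_vector_derivative (f t (s t (th t)) + eta t *\<^sub>R innov t))
                 (at t within {0..T}))
            \<and> Jd 0 = transpose (matrix_inv (G 0)) ** J 0 ** matrix_inv (G 0)"
proof -
  obtain U where U: "{0..T} \<times> Theta \<subseteq> U" and g: "smooth_on U (\<lambda>(t, x). s t x)"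
    using s_smooth by blast
  show ?thesis
  proof (cases "T = 0")
    case True
    then show ?thesis unfolding Let_def by (simp add: has_vector_derivative_at_within_singleton)
  next
    case False
    have "f t differentiable (at x)" "(\<lambda>x. h x (u t)) differentiable (at x)" for t x
      using f_smooth h_smooth smooth_on_differentiable by blast+
    moreover have "transpose (R t) = R t" "invertible (R t)" if "t \<in> {0..T}" for t
      using R_cov that unfolding pos_semidef_def by blast+
    moreover have "0 < T" if "t \<in> {0..T}" for t using False that by auto
    ultimately show ?thesis unfolding Let_def
      using online_natural_gradient_state_chart_at[OF g \<open>open Theta\<close> U _ _ _ _ _ _ _ G_inv ong] s_ode
      by blast
  qed
qed

end
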